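(* Consider a finite set $\mathcal{U}$ of users with traffic demands $T_u>0$ and attenuations $\ell_u>0$, constants $g,N_0,\Gamma>0$ and a total bandwidth $W>0$. Consider minimizing $\sum_{u\in\mathcal{U}}\frac{gN_0\Gamma}{\ell_u}\left(2^{T_u/w_u}-1\right)w_u$ over $w_u>0$ subject to $\sum_{u\in\mathcal{U}}w_u=W$, with Lagrangian $\Lambda=\sum_{u}\frac{gN_0\Gamma}{\ell_u}(2^{T_u/w_u}-1)w_u+\lambda\left(\sum_u w_u-W\right)$. The Lagrange multiplier $\lambda^*$ of a stationary point of $\Lambda$ (i.e. $\partial\Lambda/\partial w_u=0$ for all $u$ and $\partial\Lambda/\partial\lambda=0$) is a solution of $f(\lambda^* )=0$, where $$f(\lambda)=W-\sum_{u\in\mathcal{U}}\frac{T_u\ln 2}{1+W_0\!\left(\frac{1}{e}\left[\frac{\lambda\ell_u}{gN_0\Gamma}-1\right]\right)}$$ is a monotonic function of $\lambda$, and $\lambda^*$ lies in the closed interval $$\left(ze^{z+1}+1\right)\frac{gN_0\Gamma}{\ell_m}\le\lambda^*\le\left(ze^{z+1}+1\right)\frac{gN_0\Gamma}{\ell_M},\qquad z\triangleq\frac{\ln 2}{W}\sum_{u\in\mathcal{U}}T_u-1,$$ where $\ell_m=\max_u\ell_u$ and $\ell_M=\min_u\ell_u$.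
   Context: $W_0$ denotes the principal branch of the real Lambert W function, i.e. for $y\ge -1/e$, $x=W_0(y)$ is the solution $x\ge -1$ of $y=xe^x$. In the paper's terminology, $\ell_m$ is the attenuation of users closest to the base station ("minimum attenuation", largest gain) and $\ell_M$ that of cell-edge users, with $\ell_m>\ell_M$. *)

theory Defs
  imports Complex_Main
begin

text \<open>Principal branch of the real Lambert W function: for y \<ge> -1/e,
  lambertW0 y is the unique x \<ge> -1 with x * exp x = y.\<close>
definition lambertW0 :: "real \<Rightarrow> real" where
  "lambertW0 y = (THE x. x \<ge> -1 \<and> x * exp x = y)"

definition f_lambda :: "'a set \<Rightarrow> ('a \<Rightarrow> real) \<Rightarrow> ('a \<Rightarrow> real) \<Rightarrow> real \<Rightarrow> real \<Rightarrow> real \<Rightarrow> real" where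
  "f_lambda U T l K W lam =
     W - (\<Sum>u\<in>U. T u * ln 2 / (1 + lambertW0 ((1 / exp 1) * (lam * l u / K - 1))))"

end

theory Submission
  imports Defs
begin

text \<open>Write \<open>K = g N0 \<Gamma>\<close> and \<open>s\<^sub>u = T\<^sub>u ln 2 / w\<^sub>u\<close>. Stationarity in \<open>w\<^sub>u\<close> says
  \<open>\<lambda> \<ell>\<^sub>u / K = \<phi>(s\<^sub>u)\<close> with \<open>\<phi>(s) = 1 + (s - 1) e\<^sup>s\<close>, and \<open>(\<phi>(s) - 1)/e = (s - 1) e\<^sup>s\<^sup>-\<^sup>1\<close>,
  so \<open>W\<^sub>0\<close> recovers \<open>s\<^sub>u - 1\<close>: the \<open>u\<close>-th summand of \<open>f(\<lambda>)\<close> is \<open>w\<^sub>u\<close>, and \<open>f(\<lambda>) = 0\<close>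
  is the bandwidth constraint. Monotonicity of \<open>f\<close> is that of \<open>W\<^sub>0\<close>. Finally
  \<open>\<Sum> s\<^sub>u w\<^sub>u = ln 2 \<Sum> T\<^sub>u = (z + 1) W\<close>, so \<open>z + 1\<close> is a weighted mean of the \<open>s\<^sub>u\<close>: some
  \<open>s\<^sub>u\<close> lies above and some below it, and since \<open>\<phi>\<close> is increasing and \<open>\<phi>(z + 1) \<ge> 0\<close>
  this traps \<open>\<lambda>\<close> between \<open>\<phi>(z + 1) K / max \<ell>\<close> and \<open>\<phi>(z + 1) K / min \<ell>\<close>.\<close>

lemma strict_mono_on_xexp: "strict_mono_on {-1..} (\<lambda>x::real. x * exp x)"
proof (rule strict_mono_onI)
  fix a b :: real
  assume "a \<in> {-1..}" "a < b"
  show "a * exp a < b * exp b"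
  proof (rule DERIV_pos_imp_increasing_open[OF \<open>a < b\<close>])
    fix x assume "a < x"
    show "\<exists>y. DERIV (\<lambda>x. x * exp x) x :> y \<and> y > 0"
    proof (intro exI conjI)
      show "DERIV (\<lambda>x. x * exp x) x :> (1 + x) * exp x"
        by (auto intro!: derivative_eq_intros simp: algebra_simps)
      show "(1 + x) * exp x > 0"
        using \<open>a < x\<close> \<open>a \<in> {-1..}\<close> by simp
    qed
  qed (intro continuous_intros)
qed

lemma ex_xexp_eq: "y \<ge> -1 / exp 1 \<Longrightarrow> \<exists>x\<ge>-1. x * exp x = (y::real)"
proof -
  assume y: "y \<ge> -1 / exp 1"
  have "y \<le> max 1 y * exp (max 1 y)"
    using mult_left_mono[of 1 "exp (max 1 y)" "max 1 y"] by auto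
  moreover have "(-1) * exp (-1) \<le> y"
    using y by (simp add: exp_minus field_simps)
  ultimately have "\<exists>x. -1 \<le> x \<and> x \<le> max 1 y \<and> x * exp x = y"
    by (intro IVT) (auto intro!: continuous_intros)
  then show ?thesis by blast
qed

lemma lambertW0_xexp: "x \<ge> -1 \<Longrightarrow> lambertW0 (x * exp x) = (x::real)"
  unfolding lambertW0_def
  by (rule the_equality) (auto dest: strict_mono_on_eqD[OF strict_mono_on_xexp])

lemma lambertW0:
  assumes "y \<ge> -1 / exp 1"
  shows "lambertW0 y \<ge> -1" "lambertW0 y * exp (lambertW0 y) = y"
  using ex_xexp_eq[OF assms] lambertW0_xexp by auto

lemma lambertW0_gt_minus_one:
  assumes "y > -1 / exp 1"
  shows "lambertW0 y > -1"
proof -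
  have "lambertW0 y \<noteq> -1"
    using lambertW0(2)[of y] assms by (auto simp: exp_minus field_simps)
  then show ?thesis
    using lambertW0(1)[of y] assms by auto
qed

lemma lambertW0_mono:
  assumes "y1 \<ge> -1 / exp 1" "y1 \<le> y2"
  shows "lambertW0 y1 \<le> lambertW0 y2"
  using strict_mono_on_less_eq[OF strict_mono_on_xexp, of "lambertW0 y1" "lambertW0 y2"]
    lambertW0[of y1] lambertW0[of y2] assms
  by auto

text \<open>\<open>marginal_cost s\<close> is minus the derivative in \<open>w\<close> of \<open>(2 powr (T / w) - 1) * w\<close>,
  expressed through \<open>s = T ln 2 / w\<close>; stationarity thus reads \<open>\<lambda> \<ell> / K = marginal_cost s\<close>.\<close>
definition marginal_cost :: "real \<Rightarrow> real" where
  "marginal_cost s = 1 + (s - 1) * exp s"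

lemma strict_mono_on_marginal_cost: "strict_mono_on {0..} marginal_cost"
proof (rule strict_mono_onI)
  fix a b :: real
  assume "a \<in> {0..}" "a < b"
  show "marginal_cost a < marginal_cost b"
    unfolding marginal_cost_def
  proof (rule DERIV_pos_imp_increasing_open[OF \<open>a < b\<close>])
    fix x assume "a < x"
    show "\<exists>y. DERIV (\<lambda>x. 1 + (x - 1) * exp x) x :> y \<and> y > 0"
      using \<open>a < x\<close> \<open>a \<in> {0..}\<close>
      by (intro exI[of _ "x * exp x"]) (auto intro!: derivative_eq_intros simp: algebra_simps)
  qed (intro continuous_intros)
qed

lemma marginal_cost_nonneg: "s \<ge> 0 \<Longrightarrow> marginal_cost s \<ge> 0"
  using strict_mono_on_leD[OF strict_mono_on_marginal_cost, of 0 s]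
  by (simp add: marginal_cost_def)

lemma lambertW0_marginal_cost:
  "s \<ge> 0 \<Longrightarrow> lambertW0 ((marginal_cost s - 1) / exp 1) = s - 1"
  using lambertW0_xexp[of "s - 1"] by (simp add: marginal_cost_def exp_diff)

lemma stationary_point_marginal_cost:
  fixes c t lam x :: real
  assumes "x > 0" "c > 0"
    and "((\<lambda>x. c * (2 powr (t / x) - 1) * x + lam * x) has_real_derivative 0) (at x)"
  shows "lam / c = marginal_cost (t * ln 2 / x)"
proof -
  have "((\<lambda>x. c * (exp (t / x * ln 2) - 1) * x + lam * x) has_real_derivative
      c * (exp (t / x * ln 2) - 1) - c * exp (t / x * ln 2) * ln 2 * t / x + lam) (at x)"
    using \<open>x > 0\<close> by (rule_tac derivative_eq_intros refl | simp)+
  then have "c * (exp (t / x * ln 2) - 1) - c * exp (t / x * ln 2) * ln 2 * t / x + lam = 0"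
    using DERIV_unique assms(3) by (simp add: powr_def)
  then show ?thesis
    using assms(1,2) by (simp add: marginal_cost_def field_simps)
qed

lemma weighted_mean_le_some:
  fixes s w :: "'a \<Rightarrow> real"
  assumes "finite U" "U \<noteq> {}" "\<And>u. u \<in> U \<Longrightarrow> w u > 0"
    and "(\<Sum>u\<in>U. s u * w u) = c * (\<Sum>u\<in>U. w u)"
  shows "\<exists>u\<in>U. c \<le> s u"
proof (rule ccontr)
  assume "\<not> ?thesis"
  then have "(\<Sum>u\<in>U. s u * w u) < (\<Sum>u\<in>U. c * w u)"
    using assms(1-3) by (intro sum_strict_mono) auto
  then show False
    using assms(4) by (simp add: sum_distrib_left)
qed

lemma weighted_mean_ge_some:
  fixes s w :: "'a \<Rightarrow> real"
  assumes "finite U" "U \<noteq> {}" "\<And>u. u \<in> U \<Longrightarrow> w u > 0"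
    and "(\<Sum>u\<in>U. s u * w u) = c * (\<Sum>u\<in>U. w u)"
  shows "\<exists>u\<in>U. s u \<le> c"
proof -
  have "(\<Sum>u\<in>U. - s u * w u) = - c * (\<Sum>u\<in>U. w u)"
    using assms(4) by (simp add: sum_negf)
  then show ?thesis
    using weighted_mean_le_some[of U w "\<lambda>u. - s u" "- c"] assms(1-3) by auto
qed

lemma mono_on_f_lambda:
  assumes "K > 0" "\<And>u. u \<in> U \<Longrightarrow> l u > 0" "\<And>u. u \<in> U \<Longrightarrow> T u \<ge> 0"
  shows "mono_on {0<..} (f_lambda U T l K W)"
proof (rule mono_onI)
  fix a b :: real
  assume "a \<in> {0<..}" "b \<in> {0<..}" "a \<le> b"
  let ?y = "\<lambda>lam u. (1 / exp 1) * (lam * l u / K - 1)"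
  have "T u * ln 2 / (1 + lambertW0 (?y b u)) \<le> T u * ln 2 / (1 + lambertW0 (?y a u))"
    if u: "u \<in> U" for u
  proof -
    have ya: "?y a u > -1 / exp 1"
      using \<open>a \<in> {0<..}\<close> assms(1) assms(2)[OF u] by (simp add: field_simps)
    have "?y a u \<le> ?y b u"
      using \<open>a \<le> b\<close> assms(1) assms(2)[OF u] by (simp add: field_simps mult_right_mono)
    then have "lambertW0 (?y a u) \<le> lambertW0 (?y b u)"
      using ya by (intro lambertW0_mono) auto
    then show ?thesis
      using lambertW0_gt_minus_one[OF ya] assms(3)[OF u]
      by (intro divide_left_mono) auto
  qed
  then show "f_lambda U T l K W a \<le> f_lambda U T l K W b"
    unfolding f_lambda_def by (simp add: sum_mono)
qed

lemma f_lambda_stationary_eq_0: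
  assumes "K > 0" "\<And>u. u \<in> U \<Longrightarrow> T u > 0" "\<And>u. u \<in> U \<Longrightarrow> w u > 0"
    and "\<And>u. u \<in> U \<Longrightarrow> lam * l u / K = marginal_cost (T u * ln 2 / w u)"
    and "(\<Sum>u\<in>U. w u) = W"
  shows "f_lambda U T l K W lam = 0"
proof -
  have "T u * ln 2 / (1 + lambertW0 ((1 / exp 1) * (lam * l u / K - 1))) = w u"
    if u: "u \<in> U" for u
    using assms(2,3)[OF u] by (simp add: assms(4)[OF u] lambertW0_marginal_cost)
  then show ?thesis
    unfolding f_lambda_def using assms(5) by simp
qed

lemma lagrange_multiplier_bounds:
  fixes s l w :: "'a \<Rightarrow> real"
  assumes "finite U" "U \<noteq> {}" "K > 0" "c \<ge> 0"
    and "\<And>u. u \<in> U \<Longrightarrow> l u > 0" "\<And>u. u \<in> U \<Longrightarrow> w u > 0" "\<And>u. u \<in> U \<Longrightarrow> s u \<ge> 0"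
    and "\<And>u. u \<in> U \<Longrightarrow> lam * l u / K = marginal_cost (s u)"
    and "(\<Sum>u\<in>U. s u * w u) = c * (\<Sum>u\<in>U. w u)"
  shows "marginal_cost c * K / Max (l ` U) \<le> lam"
    and "lam \<le> marginal_cost c * K / Min (l ` U)"
proof -
  have fin: "finite (l ` U)" using assms(1) by simp
  have phi: "marginal_cost c * K \<ge> 0"
    using marginal_cost_nonneg[OF assms(4)] assms(3) by simp
  obtain u where u: "u \<in> U" "c \<le> s u"
    using weighted_mean_le_some[OF assms(1,2,6,9)] by blast
  have "marginal_cost c \<le> lam * l u / K"
    using strict_mono_on_leD[OF strict_mono_on_marginal_cost, of c "s u"] u
      assms(4,7,8) by simp
  then have lu: "marginal_cost c * K \<le> lam * l u"
    using assms(3) by (simp add: pos_le_divide_eq)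
  have lu_pos: "0 < l u" and lu_le: "l u \<le> Max (l ` U)"
    using u fin assms(5) by auto
  have "0 \<le> lam * l u"
    using lu phi by linarith
  then have "lam \<ge> 0"
    using lu_pos by (simp add: zero_le_mult_iff)
  then have "marginal_cost c * K \<le> lam * Max (l ` U)"
    using lu mult_left_mono[OF lu_le] by fastforce
  then show "marginal_cost c * K / Max (l ` U) \<le> lam"
    using lu_pos lu_le by (simp add: pos_divide_le_eq)
  obtain v where v: "v \<in> U" "s v \<le> c"
    using weighted_mean_ge_some[OF assms(1,2,6,9)] by blast
  have "lam * l v / K \<le> marginal_cost c"
    using strict_mono_on_leD[OF strict_mono_on_marginal_cost, of "s v" c] v
      assms(4,7,8) by simp
  then have lv: "lam * l v \<le> marginal_cost c * K"
    using assms(3) by (simp add: pos_divide_le_eq)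
  have min_pos: "0 < Min (l ` U)" and min_le: "Min (l ` U) \<le> l v"
    using v fin assms(2,5) by auto
  have "lam * Min (l ` U) \<le> marginal_cost c * K"
  proof (cases "lam \<ge> 0")
    case True
    then show ?thesis
      using lv mult_left_mono[OF min_le True] by linarith
  next
    case False
    then show ?thesis
      using mult_neg_pos[of lam "Min (l ` U)"] min_pos phi by linarith
  qed
  then show "lam \<le> marginal_cost c * K / Min (l ` U)"
    using min_pos by (simp add: pos_le_divide_eq)
qed

theorem lemma1:
  fixes U :: "'a set" and T l w :: "'a \<Rightarrow> real" and g N0 \<Gamma> W lam :: real
  assumes "finite U"
    and "\<And>u. u \<in> U \<Longrightarrow> T u > 0"
    and "\<And>u. u \<in> U \<Longrightarrow> l u > 0"
    and "g > 0" and "N0 > 0" and "\<Gamma> > 0" and "W > 0"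
    and "\<And>u. u \<in> U \<Longrightarrow> w u > 0"
    \<comment> \<open>stationarity: partial derivative of the Lagrangian in w_u vanishes\<close>
    and "\<And>u. u \<in> U \<Longrightarrow>
           ((\<lambda>x. g * N0 * \<Gamma> / l u * (2 powr (T u / x) - 1) * x + lam * x)
              has_real_derivative 0) (at (w u))"
    \<comment> \<open>stationarity in lambda: the constraint holds\<close>
    and "(\<Sum>u\<in>U. w u) = W"
  shows "f_lambda U T l (g * N0 * \<Gamma>) W lam = 0
    \<and> mono_on {0<..} (f_lambda U T l (g * N0 * \<Gamma>) W)
    \<and> (let z = ln 2 / W * (\<Sum>u\<in>U. T u) - 1 in
         (z * exp (z + 1) + 1) * (g * N0 * \<Gamma>) / Max (l ` U) \<le> lam
       \<and> lam \<le> (z * exp (z + 1) + 1) * (g * N0 * \<Gamma>) / Min (l ` U))"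
proof -
  define K where "K = g * N0 * \<Gamma>"
  define z where "z = ln 2 / W * (\<Sum>u\<in>U. T u) - 1"
  define s where "s u = T u * ln 2 / w u" for u
  have K: "K > 0" using assms(4-6) by (simp add: K_def)
  have U: "U \<noteq> {}" using assms(7,10) by auto
  have s: "s u \<ge> 0" if "u \<in> U" for u
    using assms(2,8)[OF that] by (simp add: s_def)
  have stationary: "lam * l u / K = marginal_cost (s u)" if u: "u \<in> U" for u
    using stationary_point_marginal_cost[OF assms(8)[OF u] _ assms(9)[OF u, folded K_def]]
      K assms(3)[OF u] by (simp add: s_def)
  have "(\<Sum>u\<in>U. s u * w u) = (\<Sum>u\<in>U. T u) * ln 2"
    unfolding sum_distrib_right using assms(8)
    by (intro sum.cong) (auto simp: s_def dest: less_imp_neq[symmetric])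
  then have mean: "(\<Sum>u\<in>U. s u * w u) = (z + 1) * (\<Sum>u\<in>U. w u)"
    using assms(7,10) by (simp add: z_def)
  have "z + 1 \<ge> 0"
    using assms(2,7) sum_nonneg[of U T] by (simp add: z_def less_imp_le)
  note bounds = lagrange_multiplier_bounds[OF assms(1) U K this assms(3,8) s stationary mean]
  have "marginal_cost (z + 1) = z * exp (z + 1) + 1"
    by (simp add: marginal_cost_def)
  moreover have "mono_on {0<..} (f_lambda U T l K W)"
    using assms(2) by (intro mono_on_f_lambda K assms(3) less_imp_le)
  ultimately show ?thesis
    using f_lambda_stationary_eq_0[OF K assms(2,8) stationary[unfolded s_def] assms(10)] bounds
    unfolding K_def z_def Let_def by simp
qed

end
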